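(* Let $G$ be a graph, $k\ge1$, and $S,T$ independent sets of $G$ of size $k$. Let $\mathcal{F}$ be the family obtained from an independence covering family for $(G,k)$ by removing all members of size less than $k$ and adding $S$ and $T$. Let $\mathcal{G}$ be the graph with vertex set $\mathcal{F}$ in which distinct $I,I'\in\mathcal{F}$ are adjacent iff $|I\cap I'|\ge k-1$. If there is a token jumping reconfiguration sequence $S=I_0,I_1,\dots,I_m=T$ in $G$, then there is a path from $S$ to $T$ in $\mathcal{G}$.
   Context: An independence covering family for $(G,k)$ is a family of independent sets of $G$ such that every independent set of $G$ of size at most $k$ is a subset of some member. A token jumping reconfiguration sequence from $S$ to $T$ is a finite sequence $S=I_0,\dots,I_m=T$ of independent sets of $G$ of size $k$ with each $I_{j+1}=(I_j\setminus\{u\})\cup\{v\}$ for some $u\in I_j$, $v\in V(G)\setminus I_j$. *)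

theory Defs
  imports Main
begin

definition graph :: "'a set \<Rightarrow> ('a \<Rightarrow> 'a \<Rightarrow> bool) \<Rightarrow> bool" where
  "graph V E \<longleftrightarrow> finite V \<and> (\<forall>x y. E x y \<longrightarrow> x \<in> V \<and> y \<in> V)
     \<and> (\<forall>x y. E x y \<longrightarrow> E y x) \<and> (\<forall>x. \<not> E x x)"

definition indep_set :: "'a set \<Rightarrow> ('a \<Rightarrow> 'a \<Rightarrow> bool) \<Rightarrow> 'a set \<Rightarrow> bool" where
  "indep_set V E I \<longleftrightarrow> I \<subseteq> V \<and> (\<forall>x\<in>I. \<forall>y\<in>I. \<not> E x y)"

definition indep_covering_family ::
  "'a set \<Rightarrow> ('a \<Rightarrow> 'a \<Rightarrow> bool) \<Rightarrow> nat \<Rightarrow> 'a set set \<Rightarrow> bool" where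
  "indep_covering_family V E k \<F> \<longleftrightarrow>
     (\<forall>I\<in>\<F>. indep_set V E I) \<and>
     (\<forall>J. indep_set V E J \<and> card J \<le> k \<longrightarrow> (\<exists>I\<in>\<F>. J \<subseteq> I))"

definition tj_step :: "'a set \<Rightarrow> 'a set \<Rightarrow> 'a set \<Rightarrow> bool" where
  "tj_step V I J \<longleftrightarrow> (\<exists>u\<in>I. \<exists>v\<in>V - I. J = (I - {u}) \<union> {v})"

definition tj_sequence ::
  "'a set \<Rightarrow> ('a \<Rightarrow> 'a \<Rightarrow> bool) \<Rightarrow> nat \<Rightarrow> 'a set list \<Rightarrow> 'a set \<Rightarrow> 'a set \<Rightarrow> bool" where
  "tj_sequence V E k Is S T \<longleftrightarrow> Is \<noteq> [] \<and> hd Is = S \<and> last Is = T \<and>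
     (\<forall>I\<in>set Is. indep_set V E I \<and> card I = k) \<and>
     (\<forall>j. Suc j < length Is \<longrightarrow> tj_step V (Is ! j) (Is ! Suc j))"

definition reduced_family :: "nat \<Rightarrow> 'a set set \<Rightarrow> 'a set \<Rightarrow> 'a set \<Rightarrow> 'a set set" where
  "reduced_family k C S T = {I \<in> C. k \<le> card I} \<union> {S, T}"

definition aux_adj :: "nat \<Rightarrow> 'a set \<Rightarrow> 'a set \<Rightarrow> bool" where
  "aux_adj k I I' \<longleftrightarrow> I \<noteq> I' \<and> k - 1 \<le> card (I \<inter> I')"

definition is_path :: "'b set \<Rightarrow> ('b \<Rightarrow> 'b \<Rightarrow> bool) \<Rightarrow> 'b list \<Rightarrow> 'b \<Rightarrow> 'b \<Rightarrow> bool" where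
  "is_path Vs Adj ps A B \<longleftrightarrow> ps \<noteq> [] \<and> hd ps = A \<and> last ps = B \<and> set ps \<subseteq> Vs \<and>
     (\<forall>j. Suc j < length ps \<longrightarrow> Adj (ps ! j) (ps ! Suc j))"

end

theory Submission
  imports Defs
begin

text \<open>Cover every set I_j of the reconfiguration sequence by a member J_j of the reduced
  family, starting with J_0 = S; members of the covering family that contain a k-set have size
  at least k, so they survive the reduction. A token jump keeps k - 1 tokens, hence
  |J_j \<inter> J_(j+1)| \<ge> |I_j \<inter> I_(j+1)| = k - 1: consecutive covers are equal or adjacent. The last
  cover contains T and is therefore equal or adjacent to T.\<close>

lemma is_path_singleton: "A \<in> Vs \<Longrightarrow> is_path Vs Adj [A] A A"
  unfolding is_path_def by simp

lemma is_path_snoc: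
  assumes "is_path Vs Adj ps A B" "C \<in> Vs" "Adj B C"
  shows "is_path Vs Adj (ps @ [C]) A C"
  unfolding is_path_def
proof (intro conjI allI impI)
  show "hd (ps @ [C]) = A" "set (ps @ [C]) \<subseteq> Vs"
    using assms(1,2) unfolding is_path_def by auto
next
  fix j assume j: "Suc j < length (ps @ [C])"
  show "Adj ((ps @ [C]) ! j) ((ps @ [C]) ! Suc j)"
  proof (cases "Suc j < length ps")
    case True
    then show ?thesis using assms(1) unfolding is_path_def by (simp add: nth_append)
  next
    case False
    with j have "j = length ps - 1" "Suc j = length ps" by auto
    moreover have "ps ! (length ps - 1) = B"
      using assms(1) unfolding is_path_def by (metis last_conv_nth)
    ultimately show ?thesis using assms(3) by (simp add: nth_append)
  qed
qed simp_all

lemma is_path_extend: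
  assumes "is_path Vs Adj ps A B" "C \<in> Vs" "B \<noteq> C \<longrightarrow> Adj B C"
  shows "\<exists>ps'. is_path Vs Adj ps' A C"
  using assms is_path_snoc[OF assms(1,2)] by (cases "B = C") auto

lemma card_Int_tj_step:
  assumes "tj_step V I J" "finite I"
  shows "card (I \<inter> J) = card I - 1"
proof -
  obtain u v where "u \<in> I" "v \<notin> I" "J = (I - {u}) \<union> {v}"
    using assms(1) unfolding tj_step_def by blast
  then have "I \<inter> J = I - {u}" by auto
  with \<open>u \<in> I\<close> show ?thesis by simp
qed

lemma aux_adj_mono:
  assumes "k - 1 \<le> card (I \<inter> I')" "I \<subseteq> J" "I' \<subseteq> J'" "finite J" "J \<noteq> J'"
  shows "aux_adj k J J'"
proof -
  have "card (I \<inter> I') \<le> card (J \<inter> J')"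
    using assms(2-4) by (intro card_mono) auto
  with assms(1,5) show ?thesis unfolding aux_adj_def by simp
qed

lemma finite_reduced_family_member:
  assumes "finite V" "indep_covering_family V E k C" "S \<subseteq> V" "T \<subseteq> V"
    and "X \<in> reduced_family k C S T"
  shows "finite X"
proof -
  have "X \<subseteq> V"
    using assms(2-5) unfolding reduced_family_def indep_covering_family_def indep_set_def by auto
  with assms(1) show ?thesis by (rule finite_subset[rotated])
qed

lemma reduced_family_covers:
  assumes "finite V" "indep_covering_family V E k C" "indep_set V E I" "card I = k"
  obtains J where "J \<in> reduced_family k C S T" "I \<subseteq> J"
proof -
  obtain J where J: "J \<in> C" "I \<subseteq> J"
    using assms(2-4) unfolding indep_covering_family_def by force
  have "J \<subseteq> V" using J(1) assms(2) unfolding indep_covering_family_def indep_set_def by blast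
  then have "finite J" using assms(1) by (rule finite_subset)
  then have "k \<le> card J" using J(2) assms(4) card_mono by blast
  with J that show ?thesis unfolding reduced_family_def by blast
qed

lemma tj_sequence_covered_by_reachable_member:
  assumes "graph V E" "indep_covering_family V E k C" "tj_sequence V E k Is S T"
    and "j < length Is"
  shows "\<exists>J \<in> reduced_family k C S T. Is ! j \<subseteq> J \<and>
           (\<exists>ps. is_path (reduced_family k C S T) (aux_adj k) ps S J)"
proof -
  let ?F = "reduced_family k C S T"
  have "finite V" using assms(1) unfolding graph_def by blast
  have seq: "Is \<noteq> []" "hd Is = S" "last Is = T"
    and members: "\<And>I. I \<in> set Is \<Longrightarrow> indep_set V E I \<and> card I = k"
    and steps: "\<And>i. Suc i < length Is \<Longrightarrow> tj_step V (Is ! i) (Is ! Suc i)"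
    using assms(3) unfolding tj_sequence_def by blast+
  have "S \<in> set Is" "T \<in> set Is"
    using seq hd_in_set last_in_set by metis+
  then have "S \<subseteq> V" "T \<subseteq> V"
    using members unfolding indep_set_def by blast+
  show ?thesis
    using assms(4)
  proof (induction j)
    case 0
    have "Is ! 0 = S" using seq(1,2) by (simp add: hd_conv_nth)
    moreover have "S \<in> ?F" unfolding reduced_family_def by blast
    ultimately show ?case using is_path_singleton[of S ?F "aux_adj k"] by auto
  next
    case (Suc j)
    have "Is ! j \<in> set Is" "Is ! Suc j \<in> set Is"
      using Suc.prems by simp_all
    then have before: "Is ! j \<subseteq> V" "card (Is ! j) = k"
      and after: "indep_set V E (Is ! Suc j)" "card (Is ! Suc j) = k"
      using members unfolding indep_set_def by blast+
    obtain J ps where J: "J \<in> ?F" "Is ! j \<subseteq> J" "is_path ?F (aux_adj k) ps S J"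
      using Suc.IH Suc.prems by auto
    obtain J' where J': "J' \<in> ?F" "Is ! Suc j \<subseteq> J'"
      using reduced_family_covers[OF \<open>finite V\<close> assms(2) after] by blast
    have "finite J"
      using finite_reduced_family_member[OF \<open>finite V\<close> assms(2) \<open>S \<subseteq> V\<close> \<open>T \<subseteq> V\<close> J(1)] .
    have "finite (Is ! j)" using before(1) \<open>finite V\<close> by (rule finite_subset)
    then have "k - 1 \<le> card (Is ! j \<inter> Is ! Suc j)"
      using card_Int_tj_step[OF steps[OF Suc.prems]] before(2) by simp
    then have "J \<noteq> J' \<longrightarrow> aux_adj k J J'"
      using aux_adj_mono[OF _ J(2) J'(2) \<open>finite J\<close>] by blast
    then obtain ps' where "is_path ?F (aux_adj k) ps' S J'"
      using is_path_extend[OF J(3) J'(1)] by blast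
    with J' show ?case by blast
  qed
qed

theorem lemma7p2:
  fixes V :: "'a set" and E :: "'a \<Rightarrow> 'a \<Rightarrow> bool" and k :: nat
    and C :: "'a set set" and S T :: "'a set"
  assumes "graph V E"
    and "1 \<le> k"
    and "indep_set V E S" and "card S = k"
    and "indep_set V E T" and "card T = k"
    and "indep_covering_family V E k C"
    and "tj_sequence V E k Is S T"
  shows "\<exists>ps. is_path (reduced_family k C S T) (aux_adj k) ps S T"
proof -
  let ?F = "reduced_family k C S T"
  have "Is \<noteq> []" "last Is = T"
    using assms(8) unfolding tj_sequence_def by blast+
  then have "length Is - 1 < length Is" "Is ! (length Is - 1) = T"
    by (simp_all add: last_conv_nth)
  then obtain J ps where J: "J \<in> ?F" "T \<subseteq> J" "is_path ?F (aux_adj k) ps S J"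
    using tj_sequence_covered_by_reachable_member[OF assms(1,7,8)] by metis
  have "finite V" using assms(1) unfolding graph_def by blast
  moreover have "S \<subseteq> V" "T \<subseteq> V" using assms(3,5) unfolding indep_set_def by blast+
  ultimately have "finite J" using finite_reduced_family_member[OF _ assms(7) _ _ J(1)] by blast
  have "k - 1 \<le> card (T \<inter> T)" using assms(6) by simp
  then have "J \<noteq> T \<longrightarrow> aux_adj k J T"
    using aux_adj_mono[OF _ J(2) subset_refl \<open>finite J\<close>] by blast
  moreover have "T \<in> ?F" unfolding reduced_family_def by blast
  ultimately show ?thesis using is_path_extend[OF J(3)] by blast
qed

end
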